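(* Let $\mathbf{L}\in Q^2(\mathbb{D}^2)$. An analytic function $F\colon\mathbb{D}^2\to\mathbb{C}$ has bounded $\mathbf{L}$-index in joint variables if and only if there exist $R=(r_1,r_2)\in(0,\beta]^2$, $n_0\in\mathbb{Z}_+$ and $p_0>1$ such that for each $z^0\in\mathbb{D}^2$ there is $(k_1^0,k_2^0)\in\mathbb{Z}_+^2$ with $k_1^0+k_2^0\le n_0$ and $$\max\left\{\frac{|F^{(k_1,k_2)}(z)|}{k_1!k_2!\,l_1^{k_1}(z)l_2^{k_2}(z)}: k_1+k_2\le n_0,\ z\in\mathbb{D}^2\Big[z^0,\frac{R}{\mathbf{L}(z^0)}\Big]\right\}\le \frac{p_0}{k_1^0!k_2^0!}\,\frac{|F^{(k_1^0,k_2^0)}(z^0)|}{l_1^{k_1^0}(z^0)\,l_2^{k_2^0}(z^0)}.$$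
   Context: $\mathbb{D}^2=\{(z_1,z_2)\in\mathbb{C}^2:|z_1|<1,|z_2|<1\}$, $\mathbb{Z}_+=\{0,1,2,\dots\}$, $\mathbb{R}_+=[0,\infty)$. A constant $\beta>1$ is fixed. $\mathbf{L}(z)=(l_1(z),l_2(z))$, where each $l_j\colon\mathbb{D}^2\to\mathbb{R}_+$ is continuous and satisfies $l_j(z_1,z_2)>\beta/(1-|z_j|)$ for all $(z_1,z_2)\in\mathbb{D}^2$, $j=1,2$. For $z^0\in\mathbb{C}^2$ and $R=(r_1,r_2)\in\mathbb{R}_+^2$: $\mathbb{D}^2[z^0,R]=\{z:|z_j-z_j^0|\le r_j,\ j=1,2\}$ and $\frac{R}{\mathbf{L}(z^0)}=\big(\frac{r_1}{l_1(z^0)},\frac{r_2}{l_2(z^0)}\big)$. $F^{(p,q)}=\frac{\partial^{p+q}F}{\partial z_1^p\partial z_2^q}$. An analytic $F\colon\mathbb{D}^2\to\mathbb{C}$ has bounded $\mathbf{L}$-index in joint variables if there is $n_0\in\mathbb{Z}_+$ such that for all $z\in\mathbb{D}^2$ and all $(p_1,p_2)\in\mathbb{Z}_+^2$: $\frac{|F^{(p_1,p_2)}(z)|}{p_1!p_2!\,l_1^{p_1}(z)l_2^{p_2}(z)}\le\max\{\frac{|F^{(k_1,k_2)}(z)|}{k_1!k_2!\,l_1^{k_1}(z)l_2^{k_2}(z)}:0\le k_1+k_2\le n_0\}$. $Q^2(\mathbb{D}^2)$ is the class of such $\mathbf{L}$ for which, for all $R=(r_1,r_2)\in[0,\beta]^2$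 and $j=1,2$, $0<\lambda_{1,j}(R)\le\lambda_{2,j}(R)<\infty$, where $\lambda_{1,j}(R)=\inf_{z^0\in\mathbb{D}^2}\inf\{l_j(z)/l_j(z^0): z\in\mathbb{D}^2[z^0,R/\mathbf{L}(z^0)]\}$ and $\lambda_{2,j}(R)=\sup_{z^0\in\mathbb{D}^2}\sup\{l_j(z)/l_j(z^0): z\in\mathbb{D}^2[z^0,R/\mathbf{L}(z^0)]\}$. *)

theory Defs
  imports "HOL-Analysis.Analysis"
begin

definition bidisc :: "(complex \<times> complex) set" where
  "bidisc = {z. cmod (fst z) < 1 \<and> cmod (snd z) < 1}"

definition cpolydisc :: "complex \<times> complex \<Rightarrow> real \<times> real \<Rightarrow> (complex \<times> complex) set" where
  "cpolydisc z0 R = {z. cmod (fst z - fst z0) \<le> fst R \<and> cmod (snd z - snd z0) \<le> snd R}"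

text \<open>Analyticity of a function of two complex variables on a set S:
  locally the sum of an (absolutely, i.e. unconditionally) convergent double power series.\<close>
definition analytic2_on :: "(complex \<times> complex \<Rightarrow> complex) \<Rightarrow> (complex \<times> complex) set \<Rightarrow> bool" where
  "analytic2_on F S \<longleftrightarrow> (\<forall>w\<in>S. \<exists>r>0. \<exists>a :: nat \<Rightarrow> nat \<Rightarrow> complex.
     \<forall>z. cmod (fst z - fst w) < r \<and> cmod (snd z - snd w) < r \<longrightarrow>
       ((\<lambda>(m, n). a m n * (fst z - fst w) ^ m * (snd z - snd w) ^ n) has_sum F z) UNIV)"

definition pderiv2 :: "(complex \<times> complex \<Rightarrow> complex) \<Rightarrow> nat \<Rightarrow> nat \<Rightarrow> complex \<times> complex \<Rightarrow> complex" where
  "pderiv2 F p q z = (deriv ^^ p) (\<lambda>w. (deriv ^^ q) (\<lambda>u. F (w, u)) (snd z)) (fst z)"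

definition Lnorm :: "(complex \<times> complex \<Rightarrow> complex) \<Rightarrow> (complex \<times> complex \<Rightarrow> real)
     \<Rightarrow> (complex \<times> complex \<Rightarrow> real) \<Rightarrow> nat \<Rightarrow> nat \<Rightarrow> complex \<times> complex \<Rightarrow> real" where
  "Lnorm F l1 l2 p q z = cmod (pderiv2 F p q z) / (fact p * fact q * l1 z ^ p * l2 z ^ q)"

definition bounded_L_index_joint :: "(complex \<times> complex \<Rightarrow> complex) \<Rightarrow> (complex \<times> complex \<Rightarrow> real)
     \<Rightarrow> (complex \<times> complex \<Rightarrow> real) \<Rightarrow> bool" where
  "bounded_L_index_joint F l1 l2 \<longleftrightarrow> (\<exists>n0::nat. \<forall>z\<in>bidisc. \<forall>p1 p2.
     Lnorm F l1 l2 p1 p2 z \<le> Max {Lnorm F l1 l2 k1 k2 z | k1 k2. k1 + k2 \<le> n0})"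

definition lambda1 :: "(complex \<times> complex \<Rightarrow> real) \<Rightarrow> (complex \<times> complex \<Rightarrow> real)
     \<Rightarrow> (complex \<times> complex \<Rightarrow> real) \<Rightarrow> real \<times> real \<Rightarrow> ereal" where
  "lambda1 l1 l2 l R = (INF z0\<in>bidisc. INF z\<in>bidisc \<inter> cpolydisc z0 (fst R / l1 z0, snd R / l2 z0).
       ereal (l z / l z0))"

definition lambda2 :: "(complex \<times> complex \<Rightarrow> real) \<Rightarrow> (complex \<times> complex \<Rightarrow> real)
     \<Rightarrow> (complex \<times> complex \<Rightarrow> real) \<Rightarrow> real \<times> real \<Rightarrow> ereal" where
  "lambda2 l1 l2 l R = (SUP z0\<in>bidisc. SUP z\<in>bidisc \<inter> cpolydisc z0 (fst R / l1 z0, snd R / l2 z0).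
       ereal (l z / l z0))"

definition Q2 :: "real \<Rightarrow> (complex \<times> complex \<Rightarrow> real) \<Rightarrow> (complex \<times> complex \<Rightarrow> real) \<Rightarrow> bool" where
  "Q2 \<beta> l1 l2 \<longleftrightarrow> (\<forall>r1 r2. 0 \<le> r1 \<and> r1 \<le> \<beta> \<and> 0 \<le> r2 \<and> r2 \<le> \<beta> \<longrightarrow>
     (\<forall>l\<in>{l1, l2}. 0 < lambda1 l1 l2 l (r1, r2) \<and> lambda1 l1 l2 l (r1, r2) \<le> lambda2 l1 l2 l (r1, r2)
        \<and> lambda2 l1 l2 l (r1, r2) < \<infinity>))"

end

theory Submission
  imports Defs "HOL-Complex_Analysis.Complex_Analysis"
begin

(*
  Necessity: if the L-index is at most N, expanding F into Taylor series in each variable around z0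
  bounds every derivative of order at most N on the polydisc with radii 1/(4 l_j(z0)) by a fixed
  multiple of the largest normalized derivative of order at most N at z0, and membership of L in Q2
  makes l_j(z) comparable to l_j(z0) there.

  Sufficiency: iterating the local condition along segments, the largest normalized derivative of
  order at most n0 on the polydisc with radii beta/l_j(z0) is at most p0^m times its value at z0,
  with m independent of z0 (again by Q2). Cauchy's inequality on that polydisc bounds the normalized
  derivatives of order p + q at z0 by p0^m/beta^(p+q) times this value, which is small once
  p + q is large because beta > 1.
*)

lemma power_series_higher_deriv:
  fixes d :: "nat \<Rightarrow> complex"
  assumes "s > 0" and sums: "\<And>x. x \<in> ball a s \<Longrightarrow> (\<lambda>n. d n * (x - a) ^ n) sums f x"
  shows "(deriv ^^ k) f a = fact k * d k"
proof -
  define D where "D = Abs_fps d"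
  have radius: "ereal (norm y) < fps_conv_radius D" if "norm y < s" for y :: complex
  proof -
    have "fps_conv_radius D \<ge> ereal s"
      unfolding fps_conv_radius_def D_def fps_nth_Abs_fps
    proof (rule conv_radius_geI_ex')
      fix r :: real assume "0 < r" "ereal r < ereal s"
      then have "a + of_real r \<in> ball a s" by (simp add: dist_norm)
      from sums[OF this] show "summable (\<lambda>n. d n * of_real r ^ n)" by (simp add: sums_iff)
    qed
    then show ?thesis
      using that by (intro less_le_trans[OF _ \<open>ereal s \<le> _\<close>]) simp
  qed
  have eval: "eval_fps D (x - a) = f x" if "x \<in> ball a s" for x
  proof -
    have "norm (x - a) < s"
      using that by (simp add: dist_norm norm_minus_commute)
    from sums_eval_fps[OF radius[OF this]] sums[OF that] show ?thesis
      by (simp add: D_def sums_unique2)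
  qed
  have "(deriv ^^ k) f a = (deriv ^^ k) (f \<circ> (\<lambda>x. a + x)) 0"
    by (rule higher_deriv_shift_0)
  also have "\<dots> = (deriv ^^ k) (eval_fps D) 0"
  proof (rule higher_deriv_cong_ev)
    have "eventually (\<lambda>x. x \<in> ball 0 s) (nhds (0::complex))"
      using \<open>s > 0\<close> by (intro eventually_nhds_in_open) auto
    then show "eventually (\<lambda>x. (f \<circ> (\<lambda>x. a + x)) x = eval_fps D x) (nhds 0)"
      by eventually_elim (use eval[of "a + _"] in \<open>auto simp: dist_norm\<close>)
  qed simp
  also have "\<dots> = fact k * d k"
  proof -
    have "0 < fps_conv_radius D"
      using radius[of 0] \<open>s > 0\<close> by (simp add: zero_ereal_def)
    then show ?thesis
      using fps_nth_conv_deriv[of D k] by (simp add: D_def field_simps)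
  qed
  finally show ?thesis .
qed

lemma has_sum_prod_nat_columns:
  fixes g :: "nat \<times> nat \<Rightarrow> complex"
  assumes "(g has_sum S) UNIV"
  shows "((\<lambda>m. g (m, n)) has_sum (\<Sum>\<^sub>\<infinity>m. g (m, n))) UNIV"
    and "(\<lambda>n. \<Sum>\<^sub>\<infinity>m. g (m, n)) sums S"
proof -
  have column: "((\<lambda>m. g (m, n)) has_sum (\<Sum>\<^sub>\<infinity>m. g (m, n))) UNIV" for n
  proof -
    have "g summable_on ((\<lambda>m. (m, n)) ` UNIV)"
      by (rule summable_on_subset_banach[OF has_sum_imp_summable[OF assms]]) auto
    then have "(g \<circ> (\<lambda>m. (m, n))) summable_on UNIV"
      by (subst (asm) summable_on_reindex) (auto simp: inj_on_def)
    then show ?thesis by (simp add: o_def)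
  qed
  then show "((\<lambda>m. g (m, n)) has_sum (\<Sum>\<^sub>\<infinity>m. g (m, n))) UNIV" .
  have "((\<lambda>(n, m). g (m, n)) has_sum S) (UNIV \<times> UNIV)"
    using assms has_sum_swap[of g UNIV UNIV] by simp
  from has_sum_Sigma'[OF this] column
  have "((\<lambda>n. \<Sum>\<^sub>\<infinity>m. g (m, n)) has_sum S) UNIV"
    by simp
  then show "(\<lambda>n. \<Sum>\<^sub>\<infinity>m. g (m, n)) sums S"
    by (rule has_sum_imp_sums)
qed

lemma double_power_series_partial_derivs:
  fixes c :: "nat \<Rightarrow> nat \<Rightarrow> complex" and F :: "complex \<Rightarrow> complex \<Rightarrow> complex"
  assumes "r > 0"
    and sum: "\<And>w u. w \<in> ball a r \<Longrightarrow> u \<in> ball b r \<Longrightarrow>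
      ((\<lambda>(m, n). c m n * (w - a) ^ m * (u - b) ^ n) has_sum F w u) UNIV"
  shows "(\<lambda>w. (deriv ^^ q) (F w) b) holomorphic_on ball a r"
    and "(deriv ^^ p) (\<lambda>w. (deriv ^^ q) (F w) b) a = fact p * fact q * c p q"
proof -
  define d where "d n w = (\<Sum>\<^sub>\<infinity>m. c m n * (w - a) ^ m)" for n w
  have rows: "(\<lambda>n. d n w * (u - b) ^ n) sums F w u" if "w \<in> ball a r" "u \<in> ball b r" for w u
    using has_sum_prod_nat_columns(2)[OF sum[OF that]] by (simp add: d_def infsum_cmult_left')
  have columns: "(\<lambda>m. c m n * (w - a) ^ m) sums d n w" if "w \<in> ball a r" for w n
  proof -
    \<comment> \<open>At u = b + r/2, row n of the double series is this series times (r/2)^n \<noteq> 0.\<close>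
    have "b + of_real (r / 2) \<in> ball b r"
      using \<open>r > 0\<close> by (simp add: dist_norm)
    from has_sum_prod_nat_columns(1)[OF sum[OF that this], of n]
    have "(\<lambda>m. c m n * (w - a) ^ m * of_real (r / 2) ^ n) summable_on UNIV"
      by (auto dest: has_sum_imp_summable)
    moreover have "(of_real (r / 2) :: complex) ^ n \<noteq> 0"
      using \<open>r > 0\<close> by simp
    ultimately have "(\<lambda>m. c m n * (w - a) ^ m) summable_on UNIV"
      using summable_on_cmult_left' by blast
    then show ?thesis
      unfolding d_def by (intro has_sum_imp_sums has_sum_infsum)
  qed
  have q_series: "(\<lambda>m. (fact q * c m q) * (w - a) ^ m) sums (deriv ^^ q) (F w) b"
    if "w \<in> ball a r" for w
    using sums_mult[OF columns[OF that], of "fact q"]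
      power_series_higher_deriv[OF \<open>r > 0\<close> rows[OF that], of q]
    by (simp add: algebra_simps)
  show "(\<lambda>w. (deriv ^^ q) (F w) b) holomorphic_on ball a r"
    by (rule power_series_holomorphic[OF q_series])
  show "(deriv ^^ p) (\<lambda>w. (deriv ^^ q) (F w) b) a = fact p * fact q * c p q"
    using power_series_higher_deriv[OF \<open>r > 0\<close> q_series] by simp
qed

lemma analytic2_on_local_partial_derivs:
  assumes "analytic2_on F S" "(a, b) \<in> S"
  obtains r where "r > 0"
    and "\<And>q. (\<lambda>w. (deriv ^^ q) (\<lambda>u. F (w, u)) b) holomorphic_on ball a r"
    and "\<And>p. (\<lambda>u. (deriv ^^ p) (\<lambda>w. F (w, u)) a) holomorphic_on ball b r"
    and "\<And>p q. (deriv ^^ q) (\<lambda>u. (deriv ^^ p) (\<lambda>w. F (w, u)) a) b = pderiv2 F p q (a, b)"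
proof -
  from assms obtain r c where "r > 0" and sum0: "\<And>z. cmod (fst z - a) < r \<and> cmod (snd z - b) < r \<Longrightarrow>
      ((\<lambda>(m, n). c m n * (fst z - a) ^ m * (snd z - b) ^ n) has_sum F z) UNIV"
    unfolding analytic2_on_def by fastforce
  have sum: "((\<lambda>(m, n). c m n * (w - a) ^ m * (u - b) ^ n) has_sum F (w, u)) UNIV"
    if "w \<in> ball a r" "u \<in> ball b r" for w u
    using sum0[of "(w, u)"] that by (simp add: dist_norm norm_minus_commute)
  have sum_swapped: "((\<lambda>(n, m). c m n * (u - b) ^ n * (w - a) ^ m) has_sum F (w, u)) UNIV"
    if "u \<in> ball b r" "w \<in> ball a r" for u w
    using has_sum_swap[of "\<lambda>(m, n). c m n * (w - a) ^ m * (u - b) ^ n" UNIV UNIV] sum[OF that(2,1)]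
    by (simp add: mult_ac)
  note fst_snd = double_power_series_partial_derivs[OF \<open>r > 0\<close>, of a b c "\<lambda>w u. F (w, u)", OF sum]
  note snd_fst = double_power_series_partial_derivs[OF \<open>r > 0\<close>, of b a "\<lambda>n m. c m n" "\<lambda>u w. F (w, u)",
      OF sum_swapped]
  have "(deriv ^^ q) (\<lambda>u. (deriv ^^ p) (\<lambda>w. F (w, u)) a) b = pderiv2 F p q (a, b)" for p q
    using fst_snd(2)[of p q] snd_fst(2)[of q p] by (simp add: pderiv2_def)
  with fst_snd(1) snd_fst(1) show ?thesis
    using that \<open>r > 0\<close> by blast
qed

lemma higher_deriv_taylor_series:
  assumes "g holomorphic_on S" "open S" "ball a \<rho> \<subseteq> S" "z \<in> ball a \<rho>"
  shows "(\<lambda>j. (deriv ^^ (k + j)) g a / fact j * (z - a) ^ j) sums (deriv ^^ k) g z"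
proof -
  have "(deriv ^^ k) g holomorphic_on ball a \<rho>"
    using assms by (meson holomorphic_higher_deriv holomorphic_on_subset)
  from holomorphic_power_series[OF this assms(4)] show ?thesis
    by (simp add: funpow_add add.commute)
qed

context
  fixes F :: "complex \<times> complex \<Rightarrow> complex"
  assumes F_an: "analytic2_on F bidisc"
begin

lemma holomorphic_on_unit_disc_deriv_snd:
  assumes "cmod u < 1"
  shows "(\<lambda>w. (deriv ^^ q) (\<lambda>u'. F (w, u')) u) holomorphic_on ball 0 1"
proof -
  have "(\<lambda>w. (deriv ^^ q) (\<lambda>u'. F (w, u')) u) analytic_on ball 0 1"
    unfolding analytic_on_def
  proof
    fix w :: complex assume "w \<in> ball 0 1"
    with assms have "(w, u) \<in> bidisc" by (simp add: bidisc_def)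
    from analytic2_on_local_partial_derivs[OF F_an this]
    show "\<exists>\<epsilon>>0. (\<lambda>w. (deriv ^^ q) (\<lambda>u'. F (w, u')) u) holomorphic_on ball w \<epsilon>"
      by metis
  qed
  then show ?thesis by (simp add: analytic_on_open)
qed

lemma holomorphic_on_unit_disc_deriv_fst:
  assumes "cmod w < 1"
  shows "(\<lambda>u. (deriv ^^ p) (\<lambda>w'. F (w', u)) w) holomorphic_on ball 0 1"
proof -
  have "(\<lambda>u. (deriv ^^ p) (\<lambda>w'. F (w', u)) w) analytic_on ball 0 1"
    unfolding analytic_on_def
  proof
    fix u :: complex assume "u \<in> ball 0 1"
    with assms have "(w, u) \<in> bidisc" by (simp add: bidisc_def)
    from analytic2_on_local_partial_derivs[OF F_an this]
    show "\<exists>\<epsilon>>0. (\<lambda>u. (deriv ^^ p) (\<lambda>w'. F (w', u)) w) holomorphic_on ball u \<epsilon>"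
      by metis
  qed
  then show ?thesis by (simp add: analytic_on_open)
qed

lemma pderiv2_swap_order:
  "z \<in> bidisc \<Longrightarrow> (deriv ^^ q) (\<lambda>u. (deriv ^^ p) (\<lambda>w. F (w, u)) (fst z)) (snd z) = pderiv2 F p q z"
  by (cases z) (auto elim!: analytic2_on_local_partial_derivs[OF F_an])

lemma pderiv2_taylor_fst:
  assumes "cmod w < 1" "cmod u < 1" "w' \<in> ball w (1 - cmod w)"
  shows "(\<lambda>j. pderiv2 F (k + j) q (w, u) / fact j * (w' - w) ^ j) sums pderiv2 F k q (w', u)"
  using higher_deriv_taylor_series[OF holomorphic_on_unit_disc_deriv_snd[OF assms(2)] open_ball _ assms(3)]
  by (simp add: pderiv2_def ball_subset_ball_iff)

lemma pderiv2_taylor_snd: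
  assumes "cmod w < 1" "cmod u < 1" "u' \<in> ball u (1 - cmod u)"
  shows "(\<lambda>j. pderiv2 F p (k + j) (w, u) / fact j * (u' - u) ^ j) sums pderiv2 F p k (w, u')"
proof -
  have "ball u (1 - cmod u) \<subseteq> ball 0 1"
    by (simp add: ball_subset_ball_iff)
  moreover have "pderiv2 F p k (w, v) = (deriv ^^ k) (\<lambda>v. (deriv ^^ p) (\<lambda>w'. F (w', v)) w) v"
    if "v \<in> ball 0 1" for v k
    using pderiv2_swap_order[of "(w, v)"] assms(1) that by (simp add: bidisc_def)
  ultimately show ?thesis
    using higher_deriv_taylor_series[OF holomorphic_on_unit_disc_deriv_fst[OF assms(1)] open_ball _ assms(3)]
      assms(2,3) by auto
qed

end

lemma fact_add_le_pow2: "fact (k + j) \<le> fact k * fact j * (2::real) ^ (k + j)"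
proof -
  have "fact k * fact j * ((k + j) choose j) = (fact (k + j) :: nat)"
    using binomial_fact_lemma[of j "k + j"] by (simp add: algebra_simps)
  then have "fact (k + j) = fact k * fact j * real ((k + j) choose j)"
    by (metis of_nat_fact of_nat_mult)
  moreover have "real ((k + j) choose j) \<le> 2 ^ (k + j)"
    using binomial_le_pow2[of "k + j" j] by (metis of_nat_le_iff of_nat_numeral of_nat_power)
  ultimately show ?thesis
    by (simp add: mult_left_mono)
qed

lemma taylor_term_le_geometric:
  fixes l K x X :: real
  assumes "0 < l" "0 \<le> K" "0 \<le> x" "x \<le> 1 / (4 * l)"
    and "X \<le> fact (k + j) * l ^ (k + j) * K"
  shows "X / fact j * x ^ j \<le> fact k * l ^ k * 2 ^ k * K * (1/2) ^ j"
proof -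
  have "X / fact j * x ^ j \<le> fact (k + j) * l ^ (k + j) * K / fact j * x ^ j"
    using assms by (intro mult_right_mono divide_right_mono) auto
  also have "\<dots> \<le> fact k * fact j * 2 ^ (k + j) * l ^ (k + j) * K / fact j * (1 / (4 * l)) ^ j"
    using fact_add_le_pow2[of k j] assms
    by (intro mult_mono divide_right_mono power_mono) (auto intro!: mult_nonneg_nonneg)
  also have "\<dots> = fact k * l ^ k * 2 ^ k * K * (1 / (4 * l) * 2 * l) ^ j"
    by (simp only: power_add power_mult_distrib) (simp add: field_simps)
  also have "1 / (4 * l) * 2 * l = 1 / 2"
    using \<open>0 < l\<close> by simp
  finally show ?thesis .
qed

lemma norm_taylor_sum_le:
  fixes c :: "nat \<Rightarrow> complex" and l K :: real
  assumes sums: "(\<lambda>j. c (k + j) / fact j * h ^ j) sums s"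
    and "0 < l" "0 \<le> K" "cmod h \<le> 1 / (4 * l)"
    and bound: "\<And>n. cmod (c n) \<le> fact n * l ^ n * K"
  shows "cmod s \<le> 2 * (fact k * l ^ k * 2 ^ k * K)"
proof (rule norm_sums_le[OF sums])
  show "(\<lambda>j. fact k * l ^ k * 2 ^ k * K * (1/2) ^ j) sums (2 * (fact k * l ^ k * 2 ^ k * K))"
    using sums_mult[OF geometric_sums[of "1/2::real"], of "fact k * l ^ k * 2 ^ k * K"]
    by (simp add: mult.commute)
  show "cmod (c (k + j) / fact j * h ^ j) \<le> fact k * l ^ k * 2 ^ k * K * (1/2) ^ j" for j
    using taylor_term_le_geometric[OF assms(2,3) norm_ge_zero assms(4) bound[of "k + j"]]
    by (simp add: norm_mult norm_divide norm_power)
qed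

lemma finite_indexed_by_sum_le: "finite {f k1 k2 | k1 k2. k1 + k2 \<le> (n::nat)}"
proof -
  have "{f k1 k2 | k1 k2. k1 + k2 \<le> n} \<subseteq> (\<lambda>(k1, k2). f k1 k2) ` ({..n} \<times> {..n})"
    by auto
  then show ?thesis
    by (rule finite_subset) auto
qed

definition Lmax :: "(complex \<times> complex \<Rightarrow> complex) \<Rightarrow> (complex \<times> complex \<Rightarrow> real)
     \<Rightarrow> (complex \<times> complex \<Rightarrow> real) \<Rightarrow> nat \<Rightarrow> complex \<times> complex \<Rightarrow> real" where
  "Lmax F l1 l2 n z = Max {Lnorm F l1 l2 k1 k2 z | k1 k2. k1 + k2 \<le> n}"

lemma Lnorm_le_Lmax: "k1 + k2 \<le> n \<Longrightarrow> Lnorm F l1 l2 k1 k2 z \<le> Lmax F l1 l2 n z"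
  unfolding Lmax_def by (rule Max_ge[OF finite_indexed_by_sum_le]) auto

lemma Lmax_attained:
  obtains k1 k2 where "k1 + k2 \<le> n" "Lmax F l1 l2 n z = Lnorm F l1 l2 k1 k2 z"
proof -
  have "Lmax F l1 l2 n z \<in> {Lnorm F l1 l2 k1 k2 z | k1 k2. k1 + k2 \<le> n}"
    unfolding Lmax_def by (rule Max_in[OF finite_indexed_by_sum_le]) (auto intro!: exI[of _ 0])
  then show ?thesis
    using that by blast
qed

lemma Lmax_mono:
  assumes "n \<le> n'"
  shows "Lmax F l1 l2 n z \<le> Lmax F l1 l2 n' z"
proof -
  obtain k1 k2 where "k1 + k2 \<le> n" "Lmax F l1 l2 n z = Lnorm F l1 l2 k1 k2 z"
    by (rule Lmax_attained)
  then show ?thesis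
    using Lnorm_le_Lmax[of k1 k2 n'] assms by simp
qed

lemma bounded_L_index_joint_iff_Lmax:
  "bounded_L_index_joint F l1 l2 \<longleftrightarrow>
    (\<exists>n. \<forall>z\<in>bidisc. \<forall>p q. Lnorm F l1 l2 p q z \<le> Lmax F l1 l2 n z)"
  by (simp add: bounded_L_index_joint_def Lmax_def)

lemma Lnorm_dominated_iff_Lmax_dominated:
  assumes "0 \<le> p0"
  shows "(\<forall>z0\<in>A. \<exists>k10 k20. k10 + k20 \<le> n0 \<and>
           (\<forall>k1 k2 z. k1 + k2 \<le> n0 \<and> z \<in> P z0 \<longrightarrow>
              Lnorm F l1 l2 k1 k2 z \<le>
                p0 / (fact k10 * fact k20) *
                (cmod (pderiv2 F k10 k20 z0) / (l1 z0 ^ k10 * l2 z0 ^ k20)))) \<longleftrightarrow>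
    (\<forall>z0\<in>A. \<forall>z\<in>P z0. Lmax F l1 l2 n0 z \<le> p0 * Lmax F l1 l2 n0 z0)"
proof -
  have rhs: "p0 / (fact k10 * fact k20) * (cmod (pderiv2 F k10 k20 z0) / (l1 z0 ^ k10 * l2 z0 ^ k20))
      = p0 * Lnorm F l1 l2 k10 k20 z0" for k10 k20 z0
    by (simp add: Lnorm_def)
  show ?thesis
    unfolding rhs
  proof (intro iffI ballI)
    fix z0 z assume dominated: "\<forall>z0\<in>A. \<exists>k10 k20. k10 + k20 \<le> n0 \<and>
        (\<forall>k1 k2 z. k1 + k2 \<le> n0 \<and> z \<in> P z0 \<longrightarrow> Lnorm F l1 l2 k1 k2 z \<le> p0 * Lnorm F l1 l2 k10 k20 z0)"
      and "z0 \<in> A" "z \<in> P z0"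
    then obtain k10 k20 where "k10 + k20 \<le> n0"
      and "\<And>k1 k2. k1 + k2 \<le> n0 \<Longrightarrow> Lnorm F l1 l2 k1 k2 z \<le> p0 * Lnorm F l1 l2 k10 k20 z0"
      by blast
    moreover obtain k1 k2 where "k1 + k2 \<le> n0" "Lmax F l1 l2 n0 z = Lnorm F l1 l2 k1 k2 z"
      by (rule Lmax_attained)
    ultimately have "Lmax F l1 l2 n0 z \<le> p0 * Lnorm F l1 l2 k10 k20 z0"
      by simp
    also have "\<dots> \<le> p0 * Lmax F l1 l2 n0 z0"
      using Lnorm_le_Lmax[OF \<open>k10 + k20 \<le> n0\<close>] assms by (rule mult_left_mono)
    finally show "Lmax F l1 l2 n0 z \<le> p0 * Lmax F l1 l2 n0 z0" .
  next
    fix z0 assume dominated: "\<forall>z0\<in>A. \<forall>z\<in>P z0. Lmax F l1 l2 n0 z \<le> p0 * Lmax F l1 l2 n0 z0"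
      and "z0 \<in> A"
    obtain k10 k20 where k0: "k10 + k20 \<le> n0" "Lmax F l1 l2 n0 z0 = Lnorm F l1 l2 k10 k20 z0"
      by (rule Lmax_attained)
    show "\<exists>k10 k20. k10 + k20 \<le> n0 \<and> (\<forall>k1 k2 z. k1 + k2 \<le> n0 \<and> z \<in> P z0 \<longrightarrow>
        Lnorm F l1 l2 k1 k2 z \<le> p0 * Lnorm F l1 l2 k10 k20 z0)"
    proof (intro exI conjI allI impI)
      fix k1 k2 z assume "k1 + k2 \<le> n0 \<and> z \<in> P z0"
      then have "Lnorm F l1 l2 k1 k2 z \<le> Lmax F l1 l2 n0 z"
        by (simp add: Lnorm_le_Lmax)
      also have "\<dots> \<le> p0 * Lmax F l1 l2 n0 z0"
        using dominated \<open>z0 \<in> A\<close> \<open>k1 + k2 \<le> n0 \<and> z \<in> P z0\<close> by blast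
      finally show "Lnorm F l1 l2 k1 k2 z \<le> p0 * Lnorm F l1 l2 k10 k20 z0"
        by (simp only: k0(2))
    qed (rule k0(1))
  qed
qed

lemma cpolydisc_segment:
  assumes "z \<in> cpolydisc z0 R" "0 \<le> t" "t \<le> 1"
  shows "z0 + t *\<^sub>R (z - z0) \<in> cpolydisc z0 R"
proof -
  have "cmod (t *\<^sub>R x) \<le> y" if "cmod x \<le> y" for x :: complex and y
    using assms(2,3) that mult_mono[of t 1 "cmod x" y] by simp
  with assms(1) show ?thesis
    by (simp add: cpolydisc_def)
qed

locale L_index_bidisc =
  fixes \<beta> :: real and l1 l2 :: "complex \<times> complex \<Rightarrow> real"
    and F :: "complex \<times> complex \<Rightarrow> complex"
  assumes beta: "\<beta> > 1"
    and l1_gt: "\<And>z. z \<in> bidisc \<Longrightarrow> l1 z > \<beta> / (1 - cmod (fst z))"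
    and l2_gt: "\<And>z. z \<in> bidisc \<Longrightarrow> l2 z > \<beta> / (1 - cmod (snd z))"
    and LQ: "Q2 \<beta> l1 l2"
    and F_an: "analytic2_on F bidisc"
begin

lemma l1_pos:
  assumes "z \<in> bidisc"
  shows "l1 z > 0"
proof -
  have "\<beta> / (1 - cmod (fst z)) > 0"
    using assms beta by (simp add: bidisc_def)
  then show ?thesis
    using l1_gt[OF assms] by linarith
qed

lemma l2_pos:
  assumes "z \<in> bidisc"
  shows "l2 z > 0"
proof -
  have "\<beta> / (1 - cmod (snd z)) > 0"
    using assms beta by (simp add: bidisc_def)
  then show ?thesis
    using l2_gt[OF assms] by linarith
qed

lemma polydisc_within_unit_discs:
  assumes "z0 \<in> bidisc" "\<rho>1 \<le> \<beta>" "\<rho>2 \<le> \<beta>" "z \<in> cpolydisc z0 (\<rho>1 / l1 z0, \<rho>2 / l2 z0)"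
  shows "cmod (fst z - fst z0) < 1 - cmod (fst z0)"
    and "cmod (snd z - snd z0) < 1 - cmod (snd z0)"
    and "z \<in> bidisc"
proof -
  have "1 - cmod (fst z0) > 0" "1 - cmod (snd z0) > 0"
    using assms(1) by (auto simp: bidisc_def)
  then have "\<beta> < l1 z0 * (1 - cmod (fst z0))" "\<beta> < l2 z0 * (1 - cmod (snd z0))"
    using l1_gt[OF assms(1)] l2_gt[OF assms(1)] by (simp_all add: field_simps)
  moreover have "\<rho>1 / l1 z0 \<le> \<beta> / l1 z0" "\<rho>2 / l2 z0 \<le> \<beta> / l2 z0"
    using assms(2,3) l1_pos[OF assms(1)] l2_pos[OF assms(1)] by (simp_all add: divide_right_mono)
  ultimately have "\<rho>1 / l1 z0 < 1 - cmod (fst z0)" "\<rho>2 / l2 z0 < 1 - cmod (snd z0)"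
    using l1_pos[OF assms(1)] l2_pos[OF assms(1)] by (simp_all add: field_simps)
  with assms(4) show fst: "cmod (fst z - fst z0) < 1 - cmod (fst z0)"
    and snd: "cmod (snd z - snd z0) < 1 - cmod (snd z0)"
    by (auto simp: cpolydisc_def)
  have "cmod (fst z) < 1" "cmod (snd z) < 1"
    using fst snd norm_triangle_ineq2[of "fst z" "fst z0"] norm_triangle_ineq2[of "snd z" "snd z0"]
    by linarith+
  then show "z \<in> bidisc"
    by (simp add: bidisc_def)
qed

lemma Lnorm_nonneg: "z \<in> bidisc \<Longrightarrow> 0 \<le> Lnorm F l1 l2 p q z"
  using l1_pos[of z] l2_pos[of z] by (simp add: Lnorm_def)

lemma Lmax_nonneg: "z \<in> bidisc \<Longrightarrow> 0 \<le> Lmax F l1 l2 n z"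
  using Lnorm_le_Lmax[of 0 0 n F l1 l2 z] Lnorm_nonneg[of z 0 0] by simp

lemma norm_pderiv2_eq_Lnorm:
  "z \<in> bidisc \<Longrightarrow> cmod (pderiv2 F p q z) = fact p * fact q * l1 z ^ p * l2 z ^ q * Lnorm F l1 l2 p q z"
  using l1_pos[of z] l2_pos[of z] by (simp add: Lnorm_def)

lemma lambda_bounds:
  assumes "0 \<le> \<rho>" "\<rho> \<le> \<beta>" "l \<in> {l1, l2}"
  obtains lo hi where "0 < lo" "0 < hi"
    "\<And>z0 z. z0 \<in> bidisc \<Longrightarrow> z \<in> cpolydisc z0 (\<rho> / l1 z0, \<rho> / l2 z0) \<Longrightarrow>
       lo * l z0 \<le> l z \<and> l z \<le> hi * l z0"
proof -
  let ?L1 = "lambda1 l1 l2 l (\<rho>, \<rho>)" and ?L2 = "lambda2 l1 l2 l (\<rho>, \<rho>)"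
  have q: "0 < ?L1" "?L1 \<le> ?L2" "?L2 < \<infinity>"
    using LQ assms unfolding Q2_def by blast+
  then obtain lo hi where lo: "?L1 = ereal lo" and hi: "?L2 = ereal hi"
    by (cases ?L1; cases ?L2) auto
  show ?thesis
  proof (rule that)
    show "0 < lo" "0 < hi"
      using q lo hi by auto
    fix z0 z assume z0: "z0 \<in> bidisc" and z: "z \<in> cpolydisc z0 (\<rho> / l1 z0, \<rho> / l2 z0)"
    then have "z \<in> bidisc"
      using polydisc_within_unit_discs(3) assms(2) by blast
    then have "?L1 \<le> ereal (l z / l z0)" "ereal (l z / l z0) \<le> ?L2"
      unfolding lambda1_def lambda2_def using z0 z
      by (auto intro!: INF_lower2[OF z0] SUP_upper2[OF z0] INF_lower SUP_upper)
    moreover have "l z0 > 0"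
      using assms(3) l1_pos[OF z0] l2_pos[OF z0] by auto
    ultimately show "lo * l z0 \<le> l z \<and> l z \<le> hi * l z0"
      using lo hi by (simp add: field_simps)
  qed
qed

lemma Q2_uniform_bounds:
  assumes "0 \<le> \<rho>" "\<rho> \<le> \<beta>"
  obtains lo hi where "0 < lo" "0 < hi"
    "\<And>z0 z l. z0 \<in> bidisc \<Longrightarrow> z \<in> cpolydisc z0 (\<rho> / l1 z0, \<rho> / l2 z0) \<Longrightarrow> l \<in> {l1, l2} \<Longrightarrow>
       lo * l z0 \<le> l z \<and> l z \<le> hi * l z0"
proof -
  obtain lo1 hi1 where 1: "0 < lo1" "0 < hi1" "\<And>z0 z. z0 \<in> bidisc \<Longrightarrow>
      z \<in> cpolydisc z0 (\<rho> / l1 z0, \<rho> / l2 z0) \<Longrightarrow> lo1 * l1 z0 \<le> l1 z \<and> l1 z \<le> hi1 * l1 z0"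
    using lambda_bounds[OF assms] by blast
  obtain lo2 hi2 where 2: "0 < lo2" "0 < hi2" "\<And>z0 z. z0 \<in> bidisc \<Longrightarrow>
      z \<in> cpolydisc z0 (\<rho> / l1 z0, \<rho> / l2 z0) \<Longrightarrow> lo2 * l2 z0 \<le> l2 z \<and> l2 z \<le> hi2 * l2 z0"
    using lambda_bounds[OF assms] by blast
  show ?thesis
  proof (rule that[of "min lo1 lo2" "max hi1 hi2"])
    fix z0 z l assume z0: "z0 \<in> bidisc" and z: "z \<in> cpolydisc z0 (\<rho> / l1 z0, \<rho> / l2 z0)"
      and "l \<in> {l1, l2}"
    have "min lo1 lo2 * l1 z0 \<le> lo1 * l1 z0" "hi1 * l1 z0 \<le> max hi1 hi2 * l1 z0"
      "min lo1 lo2 * l2 z0 \<le> lo2 * l2 z0" "hi2 * l2 z0 \<le> max hi1 hi2 * l2 z0"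
      using l1_pos[OF z0] l2_pos[OF z0] by (auto intro!: mult_right_mono)
    with \<open>l \<in> {l1, l2}\<close> 1(3)[OF z0 z] 2(3)[OF z0 z]
    show "min lo1 lo2 * l z0 \<le> l z \<and> l z \<le> max hi1 hi2 * l z0"
      by auto
  qed (use 1 2 in auto)
qed

lemma norm_pderiv2_quarter_polydisc_le:
  assumes z0: "(a, b) \<in> bidisc"
    and z: "(w, u) \<in> cpolydisc (a, b) ((1/4) / l1 (a, b), (1/4) / l2 (a, b))"
    and "0 \<le> M" and bounded: "\<And>p q. Lnorm F l1 l2 p q (a, b) \<le> M"
  shows "cmod (pderiv2 F k1 k2 (w, u))
    \<le> 4 * 2 ^ (k1 + k2) * fact k1 * fact k2 * l1 (a, b) ^ k1 * l2 (a, b) ^ k2 * M"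
proof -
  define L1 where "L1 = l1 (a, b)"
  define L2 where "L2 = l2 (a, b)"
  have "L1 > 0" "L2 > 0"
    using l1_pos[OF z0] l2_pos[OF z0] by (auto simp: L1_def L2_def)
  have "1/4 \<le> \<beta>"
    using beta by simp
  note within = polydisc_within_unit_discs[OF z0 this this z]
  have dist: "cmod (w - a) \<le> 1 / (4 * L1)" "cmod (u - b) \<le> 1 / (4 * L2)"
    using z by (auto simp: cpolydisc_def L1_def L2_def)
  have unit: "cmod a < 1" "cmod b < 1" "cmod u < 1"
    using z0 within(3) by (auto simp: bidisc_def)
  have balls: "w \<in> ball a (1 - cmod a)" "u \<in> ball b (1 - cmod b)"
    using within(1,2) by (auto simp: dist_norm norm_minus_commute)
  have at_center: "cmod (pderiv2 F p q (a, b)) \<le> fact p * fact q * L1 ^ p * L2 ^ q * M" for p q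
    unfolding norm_pderiv2_eq_Lnorm[OF z0] L1_def[symmetric] L2_def[symmetric]
    using bounded[of p q] \<open>L1 > 0\<close> \<open>L2 > 0\<close> by (intro mult_left_mono) auto
  have on_slice: "cmod (pderiv2 F p k2 (a, u)) \<le> 2 * (fact k2 * L2 ^ k2 * 2 ^ k2 * (fact p * L1 ^ p * M))"
    for p
  proof (rule norm_taylor_sum_le[OF pderiv2_taylor_snd[OF F_an unit(1,2) balls(2)] \<open>L2 > 0\<close> _ dist(2)])
    show "0 \<le> fact p * L1 ^ p * M"
      using \<open>L1 > 0\<close> \<open>0 \<le> M\<close> by simp
    show "cmod (pderiv2 F p n (a, b)) \<le> fact n * L2 ^ n * (fact p * L1 ^ p * M)" for n
      using at_center[of p n] by (simp add: mult_ac)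
  qed
  have "cmod (pderiv2 F k1 k2 (w, u))
      \<le> 2 * (fact k1 * L1 ^ k1 * 2 ^ k1 * (2 * fact k2 * L2 ^ k2 * 2 ^ k2 * M))"
  proof (rule norm_taylor_sum_le[OF pderiv2_taylor_fst[OF F_an unit(1,3) balls(1)] \<open>L1 > 0\<close> _ dist(1)])
    show "0 \<le> 2 * fact k2 * L2 ^ k2 * 2 ^ k2 * M"
      using \<open>L2 > 0\<close> \<open>0 \<le> M\<close> by simp
    show "cmod (pderiv2 F n k2 (a, u)) \<le> fact n * L1 ^ n * (2 * fact k2 * L2 ^ k2 * 2 ^ k2 * M)" for n
      using on_slice[of n] by (simp add: mult_ac)
  qed
  then show ?thesis
    by (simp add: L1_def L2_def power_add algebra_simps)
qed

lemma Lnorm_quarter_polydisc_le: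
  assumes z0: "z0 \<in> bidisc" and z: "z \<in> cpolydisc z0 ((1/4) / l1 z0, (1/4) / l2 z0)"
    and "0 < c" "c \<le> 1" "c * l1 z0 \<le> l1 z" "c * l2 z0 \<le> l2 z"
    and "0 \<le> M" "\<And>p q. Lnorm F l1 l2 p q z0 \<le> M" and "k1 + k2 \<le> N"
  shows "Lnorm F l1 l2 k1 k2 z \<le> 4 * (2 / c) ^ N * M"
proof -
  have "l1 z0 > 0" "l2 z0 > 0"
    using l1_pos[OF z0] l2_pos[OF z0] by auto
  moreover have "l1 z > 0" "l2 z > 0"
    using assms(3,5,6) calculation by (auto intro: less_le_trans[OF mult_pos_pos])
  ultimately have ratios: "l1 z0 / l1 z \<le> 1 / c" "l2 z0 / l2 z \<le> 1 / c"
    using assms(3,5,6) by (simp_all add: field_simps)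
  obtain a b where [simp]: "z0 = (a, b)" by (cases z0)
  obtain w u where [simp]: "z = (w, u)" by (cases z)
  have "Lnorm F l1 l2 k1 k2 z \<le>
      4 * 2 ^ (k1 + k2) * fact k1 * fact k2 * l1 z0 ^ k1 * l2 z0 ^ k2 * M
        / (fact k1 * fact k2 * l1 z ^ k1 * l2 z ^ k2)"
    unfolding Lnorm_def using norm_pderiv2_quarter_polydisc_le assms \<open>l1 z > 0\<close> \<open>l2 z > 0\<close>
    by (intro divide_right_mono) auto
  also have "\<dots> = 4 * 2 ^ (k1 + k2) * ((l1 z0 / l1 z) ^ k1 * (l2 z0 / l2 z) ^ k2) * M"
    using \<open>l1 z > 0\<close> \<open>l2 z > 0\<close> by (simp add: power_divide field_simps)
  also have "\<dots> \<le> 4 * 2 ^ (k1 + k2) * ((1 / c) ^ k1 * (1 / c) ^ k2) * M"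
    using ratios \<open>0 < c\<close> \<open>0 \<le> M\<close> \<open>l1 z0 > 0\<close> \<open>l2 z0 > 0\<close> \<open>l1 z > 0\<close> \<open>l2 z > 0\<close>
    by (intro mult_left_mono mult_right_mono mult_mono power_mono) auto
  also have "\<dots> = 4 * (2 / c) ^ (k1 + k2) * M"
    by (simp add: power_add power_divide)
  also have "\<dots> \<le> 4 * (2 / c) ^ N * M"
    using assms(3,4,7,9) by (intro mult_left_mono mult_right_mono power_increasing) auto
  finally show ?thesis .
qed

lemma Lmax_growth_if_bounded_L_index_joint:
  assumes "bounded_L_index_joint F l1 l2"
  shows "\<exists>r1 r2 (n0::nat) p0. 0 < r1 \<and> r1 \<le> \<beta> \<and> 0 < r2 \<and> r2 \<le> \<beta> \<and> p0 > 1 \<and>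
    (\<forall>z0\<in>bidisc. \<forall>z\<in>cpolydisc z0 (r1 / l1 z0, r2 / l2 z0).
       Lmax F l1 l2 n0 z \<le> p0 * Lmax F l1 l2 n0 z0)"
proof -
  obtain N where index: "\<And>z p q. z \<in> bidisc \<Longrightarrow> Lnorm F l1 l2 p q z \<le> Lmax F l1 l2 N z"
    using assms unfolding bounded_L_index_joint_iff_Lmax by blast
  have "0 \<le> (1/4::real)" "1/4 \<le> \<beta>"
    using beta by auto
  then obtain lo hi where "0 < lo" "0 < hi" and bounds: "\<And>z0 z l. z0 \<in> bidisc \<Longrightarrow>
      z \<in> cpolydisc z0 ((1/4) / l1 z0, (1/4) / l2 z0) \<Longrightarrow> l \<in> {l1, l2} \<Longrightarrow>
      lo * l z0 \<le> l z \<and> l z \<le> hi * l z0"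
    using Q2_uniform_bounds by blast
  define c where "c = min 1 lo"
  define p0 where "p0 = max 2 (4 * (2 / c) ^ N)"
  have "Lmax F l1 l2 N z \<le> p0 * Lmax F l1 l2 N z0"
    if z0: "z0 \<in> bidisc" and z: "z \<in> cpolydisc z0 ((1/4) / l1 z0, (1/4) / l2 z0)" for z0 z
  proof -
    have "c * l z0 \<le> l z" if "l \<in> {l1, l2}" for l
    proof -
      have "l z0 > 0"
        using that l1_pos[OF z0] l2_pos[OF z0] by auto
      then have "c * l z0 \<le> lo * l z0"
        by (intro mult_right_mono) (auto simp: c_def)
      then show ?thesis
        using bounds[OF z0 z that] by linarith
    qed
    then have "Lnorm F l1 l2 k1 k2 z \<le> 4 * (2 / c) ^ N * Lmax F l1 l2 N z0" if "k1 + k2 \<le> N" for k1 k2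
      using Lnorm_quarter_polydisc_le[OF z0 z] Lmax_nonneg[OF z0] index[OF z0] \<open>0 < lo\<close> that
      by (simp add: c_def)
    moreover obtain k1 k2 where "k1 + k2 \<le> N" "Lmax F l1 l2 N z = Lnorm F l1 l2 k1 k2 z"
      by (rule Lmax_attained)
    moreover have "4 * (2 / c) ^ N * Lmax F l1 l2 N z0 \<le> p0 * Lmax F l1 l2 N z0"
      using Lmax_nonneg[OF z0] by (intro mult_right_mono) (auto simp: p0_def)
    ultimately show ?thesis
      by fastforce
  qed
  moreover have "p0 > 1"
    by (simp add: p0_def)
  ultimately show ?thesis
    using beta by (intro exI[of _ "1/4"] exI[of _ N] exI[of _ p0]) auto
qed

lemma Lnorm_le_Cauchy:
  assumes z0: "z0 \<in> bidisc"
    and bound: "\<And>z. z \<in> cpolydisc z0 (\<beta> / l1 z0, \<beta> / l2 z0) \<Longrightarrow> cmod (F z) \<le> B"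
  shows "Lnorm F l1 l2 p q z0 \<le> B / \<beta> ^ (p + q)"
proof -
  obtain a b where ab: "z0 = (a, b)" by (cases z0)
  define \<rho>1 where "\<rho>1 = \<beta> / l1 z0"
  define \<rho>2 where "\<rho>2 = \<beta> / l2 z0"
  have "l1 z0 > 0" "l2 z0 > 0"
    using l1_pos[OF z0] l2_pos[OF z0] by auto
  then have "\<rho>1 > 0" "\<rho>2 > 0"
    using beta by (auto simp: \<rho>1_def \<rho>2_def)
  have in_polydisc: "(w, u) \<in> cpolydisc z0 (\<beta> / l1 z0, \<beta> / l2 z0)"
    if "w \<in> cball a \<rho>1" "u \<in> cball b \<rho>2" for w u
    using that by (simp add: cpolydisc_def ab dist_norm norm_minus_commute \<rho>1_def \<rho>2_def)
  have unit_discs: "cmod w < 1" "cmod u < 1" if "w \<in> cball a \<rho>1" "u \<in> cball b \<rho>2" for w u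
    using polydisc_within_unit_discs(3)[OF z0 order_refl order_refl in_polydisc[OF that]]
    by (auto simp: bidisc_def)
  have cballs: "cball a \<rho>1 \<subseteq> ball 0 1" "cball b \<rho>2 \<subseteq> ball 0 1"
    using unit_discs[of _ b] unit_discs[of a] \<open>\<rho>1 > 0\<close> \<open>\<rho>2 > 0\<close> by auto
  define g where "g = (\<lambda>w. (deriv ^^ q) (\<lambda>u. F (w, u)) b)"
  have g_bound: "cmod (g w) \<le> fact q * B / \<rho>2 ^ q" if "cmod (a - w) = \<rho>1" for w
  proof -
    have "w \<in> cball a \<rho>1"
      using that by (simp add: dist_norm)
    then have "(\<lambda>u. F (w, u)) holomorphic_on ball 0 1"
      using holomorphic_on_unit_disc_deriv_fst[OF F_an, of w 0] unit_discs[of w b] \<open>\<rho>2 > 0\<close> by simp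
    then have "(\<lambda>u. F (w, u)) holomorphic_on cball b \<rho>2"
      using cballs(2) by (rule holomorphic_on_subset)
    with \<open>w \<in> cball a \<rho>1\<close> show ?thesis
      unfolding g_def
      by (intro Cauchy_inequality holomorphic_on_imp_continuous_on \<open>\<rho>2 > 0\<close> bound
          holomorphic_on_subset[OF _ ball_subset_cball]) (auto simp: in_polydisc dist_norm)
  qed
  have "cmod b < 1"
    using z0 by (simp add: ab bidisc_def)
  then have "g holomorphic_on cball a \<rho>1"
    unfolding g_def by (rule holomorphic_on_subset[OF holomorphic_on_unit_disc_deriv_snd[OF F_an] cballs(1)])
  then have "cmod ((deriv ^^ p) g a) \<le> fact p * (fact q * B / \<rho>2 ^ q) / \<rho>1 ^ p"
    by (intro Cauchy_inequality holomorphic_on_imp_continuous_on \<open>\<rho>1 > 0\<close> g_bound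
        holomorphic_on_subset[OF _ ball_subset_cball])
  then have "cmod (pderiv2 F p q z0) \<le> fact p * fact q * l1 z0 ^ p * l2 z0 ^ q * (B / \<beta> ^ (p + q))"
    using \<open>l1 z0 > 0\<close> \<open>l2 z0 > 0\<close> beta
    by (simp add: pderiv2_def g_def ab \<rho>1_def \<rho>2_def power_divide power_add field_simps)
  then show ?thesis
    using \<open>l1 z0 > 0\<close> \<open>l2 z0 > 0\<close> by (simp add: Lnorm_def pos_divide_le_eq mult_ac)
qed

text \<open>Along the segment from z0 to z, l1 and l2 exceed their values at z0 at most by the
  factor \<Lambda>, so steps of length 1/m of the segment stay inside the (r1, r2)-polydiscs.\<close>
lemma polydisc_segment_step:
  assumes z0: "z0 \<in> bidisc" and z: "z \<in> cpolydisc z0 (\<beta> / l1 z0, \<beta> / l2 z0)"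
    and "0 < \<Lambda>" and growth: "\<And>w l. w \<in> cpolydisc z0 (\<beta> / l1 z0, \<beta> / l2 z0) \<Longrightarrow> l \<in> {l1, l2} \<Longrightarrow>
      l w \<le> \<Lambda> * l z0"
    and "0 < r1" "0 < r2" and m: "\<beta> * \<Lambda> \<le> real m * min r1 r2" and "i < m"
  defines "w \<equiv> \<lambda>i. z0 + (real i / real m) *\<^sub>R (z - z0)"
  shows "w (Suc i) \<in> cpolydisc (w i) (r1 / l1 (w i), r2 / l2 (w i))"
proof -
  have "m > 0"
    using \<open>i < m\<close> by simp
  have wi: "w i \<in> cpolydisc z0 (\<beta> / l1 z0, \<beta> / l2 z0)"
    unfolding w_def using \<open>i < m\<close> by (intro cpolydisc_segment[OF z]) auto
  then have "w i \<in> bidisc"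
    using polydisc_within_unit_discs(3)[OF z0] by blast
  have step: "w (Suc i) - w i = (1 / real m) *\<^sub>R (z - z0)"
  proof -
    have "w (Suc i) - w i = (real (Suc i) / real m - real i / real m) *\<^sub>R (z - z0)"
      by (simp add: w_def scaleR_diff_left)
    then show ?thesis
      using \<open>m > 0\<close> by (simp add: field_simps)
  qed
  have key: "d / real m \<le> r' / l (w i)"
    if "d \<le> \<beta> / l z0" "l \<in> {l1, l2}" "min r1 r2 \<le> r'" for d r' l
  proof -
    have "l z0 > 0" "l (w i) > 0"
      using that(2) l1_pos[OF z0] l2_pos[OF z0] l1_pos[OF \<open>w i \<in> bidisc\<close>] l2_pos[OF \<open>w i \<in> bidisc\<close>]
      by auto
    have "d / real m \<le> \<beta> * \<Lambda> / (real m * (\<Lambda> * l z0))"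
      using that(1) \<open>m > 0\<close> \<open>0 < \<Lambda>\<close> \<open>l z0 > 0\<close> by (simp add: field_simps)
    also have "\<dots> \<le> real m * min r1 r2 / (real m * (\<Lambda> * l z0))"
      using m \<open>m > 0\<close> \<open>0 < \<Lambda>\<close> \<open>l z0 > 0\<close> by (intro divide_right_mono) auto
    also have "\<dots> \<le> r' / (\<Lambda> * l z0)"
      using that(3) \<open>m > 0\<close> \<open>0 < \<Lambda>\<close> \<open>l z0 > 0\<close> by (simp add: divide_right_mono)
    also have "\<dots> \<le> r' / l (w i)"
      using growth[OF wi that(2)] \<open>l (w i) > 0\<close> that(3) \<open>0 < r1\<close> \<open>0 < r2\<close>
      by (intro divide_left_mono) auto
    finally show ?thesis .
  qed
  have "cmod (fst z - fst z0) / real m \<le> r1 / l1 (w i)" "cmod (snd z - snd z0) / real m \<le> r2 / l2 (w i)"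
    using z by (auto intro!: key simp: cpolydisc_def)
  then show ?thesis
    using step \<open>m > 0\<close> by (simp add: cpolydisc_def flip: fst_diff snd_diff)
qed

lemma Lmax_beta_polydisc_le:
  assumes "0 < r1" "0 < r2" "0 \<le> p0"
    and step: "\<And>z0 z. z0 \<in> bidisc \<Longrightarrow> z \<in> cpolydisc z0 (r1 / l1 z0, r2 / l2 z0) \<Longrightarrow>
      Lmax F l1 l2 n z \<le> p0 * Lmax F l1 l2 n z0"
  obtains m where "\<And>z0 z. z0 \<in> bidisc \<Longrightarrow> z \<in> cpolydisc z0 (\<beta> / l1 z0, \<beta> / l2 z0) \<Longrightarrow>
      Lmax F l1 l2 n z \<le> p0 ^ m * Lmax F l1 l2 n z0"
proof -
  have "0 \<le> \<beta>"
    using beta by simp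
  then obtain lo \<Lambda> where "0 < lo" "0 < \<Lambda>" and bounds: "\<And>z0 z l. z0 \<in> bidisc \<Longrightarrow>
      z \<in> cpolydisc z0 (\<beta> / l1 z0, \<beta> / l2 z0) \<Longrightarrow> l \<in> {l1, l2} \<Longrightarrow> lo * l z0 \<le> l z \<and> l z \<le> \<Lambda> * l z0"
    using Q2_uniform_bounds[OF _ order_refl] by blast
  define m where "m = nat \<lceil>\<beta> * \<Lambda> / min r1 r2\<rceil> + 1"
  have "m > 0"
    by (simp add: m_def)
  have "\<beta> * \<Lambda> / min r1 r2 \<le> real m"
    unfolding m_def by linarith
  then have m: "\<beta> * \<Lambda> \<le> real m * min r1 r2"
    using assms(1,2) by (simp add: pos_divide_le_eq)
  show ?thesis
  proof (rule that)
    fix z0 z assume z0: "z0 \<in> bidisc" and z: "z \<in> cpolydisc z0 (\<beta> / l1 z0, \<beta> / l2 z0)"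
    have growth: "\<And>w l. w \<in> cpolydisc z0 (\<beta> / l1 z0, \<beta> / l2 z0) \<Longrightarrow> l \<in> {l1, l2} \<Longrightarrow>
        l w \<le> \<Lambda> * l z0"
      using bounds[OF z0] by blast
    define w where "w i = z0 + (real i / real m) *\<^sub>R (z - z0)" for i
    have w_in: "w i \<in> bidisc" if "i \<le> m" for i
    proof -
      have "w i \<in> cpolydisc z0 (\<beta> / l1 z0, \<beta> / l2 z0)"
        unfolding w_def using that \<open>m > 0\<close> by (intro cpolydisc_segment[OF z]) auto
      then show ?thesis
        by (rule polydisc_within_unit_discs(3)[OF z0 order_refl order_refl])
    qed
    have chain: "Lmax F l1 l2 n (w i) \<le> p0 ^ i * Lmax F l1 l2 n z0" if "i \<le> m" for i
      using that
    proof (induction i)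
      case 0
      then show ?case by (simp add: w_def)
    next
      case (Suc i)
      have "w (Suc i) \<in> cpolydisc (w i) (r1 / l1 (w i), r2 / l2 (w i))"
        unfolding w_def using Suc.prems
        by (intro polydisc_segment_step[OF z0 z \<open>0 < \<Lambda>\<close> growth assms(1,2) m]) auto
      then have "Lmax F l1 l2 n (w (Suc i)) \<le> p0 * Lmax F l1 l2 n (w i)"
        using step[OF w_in] Suc.prems by simp
      also have "\<dots> \<le> p0 * (p0 ^ i * Lmax F l1 l2 n z0)"
        using Suc assms(3) by (intro mult_left_mono) auto
      finally show ?case by simp
    qed
    have "w m = z"
      using \<open>m > 0\<close> by (simp add: w_def)
    then show "Lmax F l1 l2 n z \<le> p0 ^ m * Lmax F l1 l2 n z0"
      using chain[of m] by simp
  qed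
qed

lemma bounded_L_index_joint_if_Lmax_dominated:
  assumes "0 < r1" "0 < r2" "0 \<le> p0"
    and step: "\<And>z0 z. z0 \<in> bidisc \<Longrightarrow> z \<in> cpolydisc z0 (r1 / l1 z0, r2 / l2 z0) \<Longrightarrow>
      Lmax F l1 l2 n0 z \<le> p0 * Lmax F l1 l2 n0 z0"
  shows "bounded_L_index_joint F l1 l2"
proof -
  obtain m where growth: "\<And>z0 z. z0 \<in> bidisc \<Longrightarrow> z \<in> cpolydisc z0 (\<beta> / l1 z0, \<beta> / l2 z0) \<Longrightarrow>
      Lmax F l1 l2 n0 z \<le> p0 ^ m * Lmax F l1 l2 n0 z0"
    using Lmax_beta_polydisc_le[OF assms] by blast
  obtain N where N: "p0 ^ m < \<beta> ^ N"
    using real_arch_pow[OF beta] by blast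
  have "Lnorm F l1 l2 p q z0 \<le> Lmax F l1 l2 (max N n0) z0" if z0: "z0 \<in> bidisc" for p q z0
  proof (cases "p + q \<le> max N n0")
    case True
    then show ?thesis by (rule Lnorm_le_Lmax)
  next
    case False
    have "cmod (F z) \<le> p0 ^ m * Lmax F l1 l2 n0 z0"
      if "z \<in> cpolydisc z0 (\<beta> / l1 z0, \<beta> / l2 z0)" for z
      using Lnorm_le_Lmax[of 0 0 n0 F l1 l2 z] growth[OF z0 that]
      by (simp add: Lnorm_def pderiv2_def)
    then have "Lnorm F l1 l2 p q z0 \<le> p0 ^ m * Lmax F l1 l2 n0 z0 / \<beta> ^ (p + q)"
      by (rule Lnorm_le_Cauchy[OF z0])
    also have "\<dots> \<le> Lmax F l1 l2 n0 z0"
    proof -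
      have "\<beta> ^ N \<le> \<beta> ^ (p + q)"
        using False beta by (intro power_increasing) auto
      with N have "p0 ^ m * Lmax F l1 l2 n0 z0 \<le> \<beta> ^ (p + q) * Lmax F l1 l2 n0 z0"
        using Lmax_nonneg[OF z0] by (intro mult_right_mono) auto
      then show ?thesis
        using beta by (simp add: pos_divide_le_eq mult.commute)
    qed
    also have "\<dots> \<le> Lmax F l1 l2 (max N n0) z0"
      by (rule Lmax_mono) simp
    finally show ?thesis .
  qed
  then show ?thesis
    unfolding bounded_L_index_joint_iff_Lmax by blast
qed

end

theorem theorem4:
  fixes \<beta> :: real and l1 l2 :: "complex \<times> complex \<Rightarrow> real"
    and F :: "complex \<times> complex \<Rightarrow> complex"
  assumes beta: "\<beta> > 1"
    and cont1: "continuous_on bidisc l1" and cont2: "continuous_on bidisc l2"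
    and l1_gt: "\<And>z. z \<in> bidisc \<Longrightarrow> l1 z > \<beta> / (1 - cmod (fst z))"
    and l2_gt: "\<And>z. z \<in> bidisc \<Longrightarrow> l2 z > \<beta> / (1 - cmod (snd z))"
    and LQ: "Q2 \<beta> l1 l2"
    and F_an: "analytic2_on F bidisc"
  shows "bounded_L_index_joint F l1 l2 \<longleftrightarrow>
    (\<exists>r1 r2 (n0::nat) p0. 0 < r1 \<and> r1 \<le> \<beta> \<and> 0 < r2 \<and> r2 \<le> \<beta> \<and> p0 > 1 \<and>
      (\<forall>z0\<in>bidisc. \<exists>k10 k20. k10 + k20 \<le> n0 \<and>
         (\<forall>k1 k2 z. k1 + k2 \<le> n0 \<and> z \<in> cpolydisc z0 (r1 / l1 z0, r2 / l2 z0) \<longrightarrow>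
            Lnorm F l1 l2 k1 k2 z \<le>
              p0 / (fact k10 * fact k20) *
              (cmod (pderiv2 F k10 k20 z0) / (l1 z0 ^ k10 * l2 z0 ^ k20)))))"
proof -
  interpret L_index_bidisc \<beta> l1 l2 F
    using beta l1_gt l2_gt LQ F_an by unfold_locales
  have Lmax_form: "bounded_L_index_joint F l1 l2 \<longleftrightarrow>
    (\<exists>r1 r2 (n0::nat) p0. 0 < r1 \<and> r1 \<le> \<beta> \<and> 0 < r2 \<and> r2 \<le> \<beta> \<and> p0 > 1 \<and>
      (\<forall>z0\<in>bidisc. \<forall>z\<in>cpolydisc z0 (r1 / l1 z0, r2 / l2 z0).
         Lmax F l1 l2 n0 z \<le> p0 * Lmax F l1 l2 n0 z0))" (is "_ \<longleftrightarrow> ?growth")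
  proof
    assume "bounded_L_index_joint F l1 l2"
    then show "?growth"
      by (rule Lmax_growth_if_bounded_L_index_joint)
  next
    assume ?growth
    then obtain r1 r2 n0 p0 where "0 < r1" "0 < r2" "p0 > 1"
      and "\<forall>z0\<in>bidisc. \<forall>z\<in>cpolydisc z0 (r1 / l1 z0, r2 / l2 z0).
        Lmax F l1 l2 n0 z \<le> p0 * Lmax F l1 l2 n0 z0"
      by blast
    then show "bounded_L_index_joint F l1 l2"
      by (intro bounded_L_index_joint_if_Lmax_dominated[of r1 r2 p0 n0]) auto
  qed
  show ?thesis
    unfolding Lmax_form
    by (intro ex_cong1 conj_cong refl Lnorm_dominated_iff_Lmax_dominated[symmetric]) simp
qed

end
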